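(* Let $\mathcal{G}=(\mathcal{P},\mathcal{L})$ be a Fischer space with finitely many points, let $R$ be a commutative ring with $2=0$, let $A=M_R(\mathcal{G},1)$ and let $s=\sum_{p\in\mathcal{P}}p\in A$. Then $\operatorname{Ann}(A)=Rs$.
   Context: A 3-transposition group is a pair $(G,D)$ where $D$ is a single conjugacy class of involutions generating $G$ with $de$ of order at most $3$ for all $d,e\in D$. Its Fischer space $\mathcal{G}=(\mathcal{P},\mathcal{L})$ has $\mathcal{P}=D$ and as lines the $3$-subsets consisting of the three involutions of a subgroup isomorphic to $\mathrm{Sym}(3)$; since $D$ is one conjugacy class, $\mathcal{G}$ is connected. Distinct points on a common line are collinear ($p\sim q$), and $p\wedge q$ is the third point of that line. The nilpotent Matsuo algebra $A=M_R(\mathcal{G},1)$ is the free $R$-module with basis $\mathcal{P}$ and commutative bilinear product $p\cdot q=0$ if $p=q$ or $p\not\sim q$, $p\cdot q=p+q+p\wedge q$ if $p\sim q$. $\operatorname{Ann}(A)=\{v\in A: vw=0 \text{ for all } w\in A\}$. *)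

theory Defs
  imports "HOL-Algebra.Algebra"
begin

text \<open>3-transposition groups (G, D): D is a single conjugacy class of involutions
generating G, and de has order at most 3 for all d, e in D.  (group.ord gives 0 for
infinite order, so we require the order to lie in {1,2,3}.)\<close>
definition three_transposition_group :: "'a monoid \<Rightarrow> 'a set \<Rightarrow> bool" where
  "three_transposition_group G D \<longleftrightarrow>
     group G \<and> D \<subseteq> carrier G \<and>
     (\<exists>d\<in>D. D = {g \<otimes>\<^bsub>G\<^esub> d \<otimes>\<^bsub>G\<^esub> inv\<^bsub>G\<^esub> g | g. g \<in> carrier G}) \<and>
     (\<forall>d\<in>D. group.ord G d = 2) \<and>
     generate G D = carrier G \<and>
     (\<forall>d\<in>D. \<forall>e\<in>D. group.ord G (d \<otimes>\<^bsub>G\<^esub> e) \<in> {1, 2, 3})"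

definition fischer_lines :: "'a monoid \<Rightarrow> 'a set \<Rightarrow> 'a set set" where
  "fischer_lines G D =
     {T. T \<subseteq> D \<and> card T = 3 \<and>
         (\<exists>H. subgroup H G \<and> G\<lparr>carrier := H\<rparr> \<cong> sym_group 3 \<and>
              T = {h \<in> H. group.ord G h = 2})}"

definition collinear :: "'a monoid \<Rightarrow> 'a set \<Rightarrow> 'a \<Rightarrow> 'a \<Rightarrow> bool" where
  "collinear G D p q \<longleftrightarrow> p \<noteq> q \<and> (\<exists>l\<in>fischer_lines G D. p \<in> l \<and> q \<in> l)"

definition wedge :: "'a monoid \<Rightarrow> 'a set \<Rightarrow> 'a \<Rightarrow> 'a \<Rightarrow> 'a" where
  "wedge G D p q =
     (THE r. r \<noteq> p \<and> r \<noteq> q \<and> (\<exists>l\<in>fischer_lines G D. l = {p, q, r}))"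

text \<open>Elements of the free R-module with basis D: functions vanishing outside D.\<close>
definition matsuo_carrier :: "'a set \<Rightarrow> ('a \<Rightarrow> 'r::comm_ring_1) set" where
  "matsuo_carrier D = {v. \<forall>x. x \<notin> D \<longrightarrow> v x = 0}"

definition basis_prod :: "'a monoid \<Rightarrow> 'a set \<Rightarrow> 'a \<Rightarrow> 'a \<Rightarrow> 'a \<Rightarrow> 'r::comm_ring_1" where
  "basis_prod G D p q =
     (if collinear G D p q
      then (\<lambda>x. (if x = p then 1 else 0) + (if x = q then 1 else 0)
                 + (if x = wedge G D p q then 1 else 0))
      else (\<lambda>x. 0))"

definition matsuo_mult ::
  "'a monoid \<Rightarrow> 'a set \<Rightarrow> ('a \<Rightarrow> 'r::comm_ring_1) \<Rightarrow> ('a \<Rightarrow> 'r) \<Rightarrow> ('a \<Rightarrow> 'r)" where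
  "matsuo_mult G D v w = (\<lambda>x. \<Sum>p\<in>D. \<Sum>q\<in>D. v p * w q * basis_prod G D p q x)"

definition matsuo_ann :: "'a monoid \<Rightarrow> 'a set \<Rightarrow> ('a \<Rightarrow> 'r::comm_ring_1) set" where
  "matsuo_ann G D = {v \<in> matsuo_carrier D.
                       \<forall>w \<in> matsuo_carrier D. matsuo_mult G D v w = (\<lambda>_. 0)}"

definition point_sum :: "'a set \<Rightarrow> 'a \<Rightarrow> 'r::comm_ring_1" where
  "point_sum D = (\<lambda>x. if x \<in> D then 1 else 0)"

end

theory Submission
  imports Defs
begin

text \<open>
  For a line \<open>{p, q, r}\<close> the coefficient of \<open>p\<close> in \<open>v \<cdot> r\<close> is \<open>v p + v q\<close>, so in
  characteristic 2 an element of the annihilator is constant along lines, hence constant on \<open>D\<close>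
  because the collinearity graph is connected: \<open>D\<close> is a generating conjugacy class, and
  conjugating a point \<open>c\<close> by \<open>d \<in> D\<close> either fixes \<open>c\<close> or, when \<open>dc\<close> has order 3 and so
  \<open>d, c\<close> generate a \<open>Sym(3)\<close>, yields the third point of the line through \<open>c\<close> and \<open>d\<close>.
  Conversely \<open>s \<cdot> q = \<Sum>\<^bsub>p \<sim> q\<^esub> (p + q + p \<and> q)\<close> vanishes, since \<open>p \<mapsto> p \<and> q\<close> is a
  fixed-point-free involution of the points collinear with \<open>q\<close> preserving the summands.
\<close>

context group
begin

lemma ord_eq_2_iff:
  assumes x: "x \<in> carrier G"
  shows "ord x = 2 \<longleftrightarrow> x \<noteq> \<one> \<and> x \<otimes> x = \<one>"
proof -
  have "x \<otimes> x = \<one> \<longleftrightarrow> ord x dvd 2"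
    using pow_eq_id[OF x, of 2] x by (simp add: numeral_2_eq_2)
  moreover have "ord x dvd 2 \<longleftrightarrow> ord x = 1 \<or> ord x = 2"
    using prime_nat_iff[of 2] by auto
  ultimately show ?thesis using ord_eq_1[OF x] by auto
qed

lemma involution_inv: "x \<in> carrier G \<Longrightarrow> x \<otimes> x = \<one> \<Longrightarrow> inv x = x"
  by (simp add: inv_char)

lemma commuting_involutions_subgroup:
  assumes x: "x \<in> carrier G" and y: "y \<in> carrier G"
    and xx: "x \<otimes> x = \<one>" and yy: "y \<otimes> y = \<one>" and xy: "x \<otimes> y = y \<otimes> x"
  shows "subgroup {\<one>, x, y, x \<otimes> y} G"
proof -
  have xx': "x \<otimes> (x \<otimes> z) = z" and yy': "y \<otimes> (y \<otimes> z) = z"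
    and yx': "y \<otimes> (x \<otimes> z) = x \<otimes> (y \<otimes> z)" if "z \<in> carrier G" for z
    using that x y xx yy xy by (simp_all flip: m_assoc)
  note word_simps = m_assoc xx xx' yy yy' yx' xy[symmetric] x y
  show ?thesis
  proof
    fix a b assume "a \<in> {\<one>, x, y, x \<otimes> y}" "b \<in> {\<one>, x, y, x \<otimes> y}"
    then show "a \<otimes> b \<in> {\<one>, x, y, x \<otimes> y}"
      by (simp only: insert_iff empty_iff) (elim disjE; simp add: word_simps)
  next
    fix a assume "a \<in> {\<one>, x, y, x \<otimes> y}"
    then show "inv a \<in> {\<one>, x, y, x \<otimes> y}"
      using involution_inv[OF x xx] involution_inv[OF y yy] x y by (auto simp: inv_mult_group xy)
  qed (use x y in auto)
qed

lemma sym_group_3_involutions_not_commute: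
  assumes H: "subgroup H G" "G\<lparr>carrier := H\<rparr> \<cong> sym_group 3"
    and x: "x \<in> H" "ord x = 2" and y: "y \<in> H" "ord y = 2" and "x \<noteq> y"
  shows "x \<otimes> y \<noteq> y \<otimes> x"
proof
  assume comm: "x \<otimes> y = y \<otimes> x"
  have xc: "x \<in> carrier G" and yc: "y \<in> carrier G" using x y subgroup.mem_carrier[OF H(1)] by auto
  have x1: "x \<noteq> \<one>" "x \<otimes> x = \<one>" and y1: "y \<noteq> \<one>" "y \<otimes> y = \<one>"
    using x y ord_eq_2_iff xc yc by auto
  define K where "K = {\<one>, x, y, x \<otimes> y}"
  have "x \<otimes> y \<noteq> \<one>"
  proof
    assume "x \<otimes> y = \<one>"
    then have "inv y = x" using inv_equality xc yc by blast
    then show False using involution_inv[OF yc y1(2)] \<open>x \<noteq> y\<close> by simp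
  qed
  moreover have "x \<otimes> y \<noteq> x" "x \<otimes> y \<noteq> y" using x1 y1 xc yc by simp_all
  ultimately have "card K = 4" using x1 y1 \<open>x \<noteq> y\<close> by (auto simp: K_def)
  have "subgroup K (G\<lparr>carrier := H\<rparr>)"
    using subgroup_incl[OF commuting_involutions_subgroup[OF xc yc x1(2) y1(2) comm] H(1)]
      x y H(1) by (auto simp: K_def intro: subgroup.m_closed subgroup.one_closed)
  then have "card K dvd order (G\<lparr>carrier := H\<rparr>)"
    by (metis dvd_triv_right group.lagrange subgroup.subgroup_is_group[OF H(1) is_group])
  moreover have "order (G\<lparr>carrier := H\<rparr>) = 6"
    using iso_same_card[OF H(2)] by (simp add: order_def sym_group_card_carrier fact_numeral)
  ultimately show False using \<open>card K = 4\<close> by simp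
qed

end

lemma transpose_12_23_relations:
  fixes f :: "nat \<Rightarrow> nat"
  defines "s \<equiv> Transposition.transpose (1::nat) 2" and "t \<equiv> Transposition.transpose (2::nat) 3"
  shows "s \<circ> s = id" "s \<circ> (s \<circ> f) = f" "t \<circ> t = id" "t \<circ> (t \<circ> f) = f"
    "t \<circ> (s \<circ> t) = s \<circ> (t \<circ> s)" "t \<circ> (s \<circ> (t \<circ> f)) = s \<circ> (t \<circ> (s \<circ> f))"
  by (auto simp: fun_eq_iff s_def t_def transpose_def)

locale involution_pair_order_3 = group +
  fixes d e
  assumes d: "d \<in> carrier G" and e: "e \<in> carrier G"
    and ord_d: "ord d = 2" and ord_e: "ord e = 2" and ord_de: "ord (d \<otimes> e) = 3"
begin

definition dihedral :: "'a set" where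
  "dihedral = {\<one>, d, e, d \<otimes> e, e \<otimes> d, d \<otimes> (e \<otimes> d)}"

lemma d_sq: "d \<otimes> d = \<one>" and e_sq: "e \<otimes> e = \<one>" and d_neq_one: "d \<noteq> \<one>" and e_neq_one: "e \<noteq> \<one>"
  using ord_eq_2_iff d e ord_d ord_e by auto

lemma de_cube: "d \<otimes> (e \<otimes> (d \<otimes> (e \<otimes> (d \<otimes> e)))) = \<one>"
  using pow_eq_id[of "d \<otimes> e" 3] d e ord_de by (simp add: numeral_3_eq_3 m_assoc)

lemma braid: "e \<otimes> (d \<otimes> e) = d \<otimes> (e \<otimes> d)"
proof -
  have "inv (e \<otimes> (d \<otimes> e)) = d \<otimes> (e \<otimes> d)"
    by (rule inv_equality) (use de_cube d e in \<open>simp_all add: m_assoc\<close>)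
  moreover have "inv (e \<otimes> (d \<otimes> e)) = e \<otimes> (d \<otimes> e)"
    using d e involution_inv[OF d d_sq] involution_inv[OF e e_sq] by (simp add: inv_mult_group m_assoc)
  ultimately show ?thesis by simp
qed

lemma cancel_d: "d \<otimes> (d \<otimes> z) = z" and cancel_e: "e \<otimes> (e \<otimes> z) = z"
  and braid': "e \<otimes> (d \<otimes> (e \<otimes> z)) = d \<otimes> (e \<otimes> (d \<otimes> z))" if "z \<in> carrier G"
  using that d e d_sq e_sq braid by (simp_all flip: m_assoc)

text \<open>Together with \<open>m_assoc\<close>, these rules normalise every product of two elements of
  \<open>dihedral\<close> to one of its six right-nested words.\<close>

lemmas word_simps = m_assoc d_sq e_sq braid cancel_d cancel_e braid' inv_mult_group d e
  involution_inv[OF d d_sq] involution_inv[OF e e_sq]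

lemma words_neq_one:
  "d \<noteq> \<one>" "e \<noteq> \<one>" "d \<otimes> e \<noteq> \<one>" "e \<otimes> d \<noteq> \<one>" "d \<otimes> (e \<otimes> d) \<noteq> \<one>"
proof -
  show de: "d \<otimes> e \<noteq> \<one>" using ord_eq_1[of "d \<otimes> e"] ord_de d e by simp
  show "e \<otimes> d \<noteq> \<one>"
  proof
    assume "e \<otimes> d = \<one>"
    then have "inv (e \<otimes> d) = \<one>" by simp
    with de show False by (simp add: word_simps)
  qed
  show "d \<otimes> (e \<otimes> d) \<noteq> \<one>"
  proof
    assume ded: "d \<otimes> (e \<otimes> d) = \<one>"
    have "e = d \<otimes> (d \<otimes> (e \<otimes> d)) \<otimes> d" by (simp add: word_simps)
    also have "\<dots> = \<one>" by (simp add: ded d d_sq)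
    finally show False using e_neq_one by simp
  qed
qed (fact d_neq_one e_neq_one)+

lemma dihedral_elements_distinct:
  "distinct [\<one>, d, e, d \<otimes> e, e \<otimes> d, d \<otimes> (e \<otimes> d)]"
proof -
  have neq: "u \<noteq> v" if "u \<in> carrier G" "v \<in> carrier G" "inv u \<otimes> v \<noteq> \<one>" for u v
    using that by auto
  show ?thesis
    by (simp, intro conjI; rule neq; simp add: word_simps words_neq_one)
qed

lemma dihedral_subgroup: "subgroup dihedral G"
proof
  fix a b assume "a \<in> dihedral" "b \<in> dihedral"
  then show "a \<otimes> b \<in> dihedral"
    unfolding dihedral_def by (simp only: insert_iff empty_iff) (elim disjE; simp add: word_simps)
next
  fix a assume "a \<in> dihedral"
  then show "inv a \<in> dihedral"
    unfolding dihedral_def by (simp only: insert_iff empty_iff) (elim disjE; simp add: word_simps)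
qed (auto simp: dihedral_def d e)

definition to_perm :: "'a \<Rightarrow> nat \<Rightarrow> nat" where
  "to_perm x =
    (if x = \<one> then id
     else if x = d then Transposition.transpose 1 2
     else if x = e then Transposition.transpose 2 3
     else if x = d \<otimes> e then Transposition.transpose 1 2 \<circ> Transposition.transpose 2 3
     else if x = e \<otimes> d then Transposition.transpose 2 3 \<circ> Transposition.transpose 1 2
     else Transposition.transpose 1 2 \<circ> (Transposition.transpose 2 3 \<circ> Transposition.transpose 1 2))"

lemma to_perm_simps:
  "to_perm \<one> = id"
  "to_perm d = Transposition.transpose 1 2"
  "to_perm e = Transposition.transpose 2 3"
  "to_perm (d \<otimes> e) = Transposition.transpose 1 2 \<circ> Transposition.transpose 2 3"
  "to_perm (e \<otimes> d) = Transposition.transpose 2 3 \<circ> Transposition.transpose 1 2"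
  "to_perm (d \<otimes> (e \<otimes> d)) =
     Transposition.transpose 1 2 \<circ> (Transposition.transpose 2 3 \<circ> Transposition.transpose 1 2)"
  using dihedral_elements_distinct by (auto simp: to_perm_def)
lemma to_perm_mult:
  assumes "x \<in> dihedral" "y \<in> dihedral"
  shows "to_perm (x \<otimes> y) = to_perm x \<circ> to_perm y"
  using assms unfolding dihedral_def
  \<comment> \<open>\<open>simp only\<close> on the permutation side: the default simpset rewrites \<open>1\<close> to \<open>Suc 0\<close>
    inside the transpositions, after which the relations no longer match.\<close>
  by (simp only: insert_iff empty_iff) (elim disjE; simp add: word_simps;
      simp only: to_perm_simps transpose_12_23_relations comp_assoc id_comp comp_id)

lemma to_perm_permutes: "x \<in> dihedral \<Longrightarrow> to_perm x permutes {1..3}"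
  unfolding dihedral_def
  by (auto simp: to_perm_simps intro!: permutes_swap_id permutes_compose)

lemma inj_on_to_perm: "inj_on to_perm dihedral"
proof (rule inj_on_imageI2)
  show "inj_on ((\<lambda>\<sigma>. (\<sigma> 1, \<sigma> 2)) \<circ> to_perm) dihedral"
    using dihedral_elements_distinct
    by (simp add: dihedral_def to_perm_simps transpose_def flip: distinct_map)
qed

lemma dihedral_iso_sym_group_3: "G\<lparr>carrier := dihedral\<rparr> \<cong> sym_group 3"
proof -
  have "card dihedral = card (carrier (sym_group 3))"
    using dihedral_elements_distinct
    by (simp add: dihedral_def sym_group_card_carrier fact_numeral flip: distinct_card)
  then have "to_perm ` dihedral = carrier (sym_group 3)"
    using to_perm_permutes by (intro card_subset_eq)
      (auto simp: sym_group_carrier card_image[OF inj_on_to_perm] sym_group_def finite_permutations)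
  then have "to_perm \<in> iso (G\<lparr>carrier := dihedral\<rparr>) (sym_group 3)"
    using to_perm_permutes to_perm_mult inj_on_to_perm
    by (auto simp: iso_def hom_def bij_betw_def sym_group_carrier sym_group_mult)
  then show ?thesis unfolding is_iso_def by blast
qed

lemma involutions_distinct: "distinct [d, e, d \<otimes> e \<otimes> d]"
  using dihedral_elements_distinct d e by (simp add: m_assoc)

lemma dihedral_involutions: "{h \<in> dihedral. ord h = 2} = {d, e, d \<otimes> e \<otimes> d}"
proof -
  have "ord (d \<otimes> (e \<otimes> d)) = 2" "ord (d \<otimes> e) \<noteq> 2" "ord (e \<otimes> d) \<noteq> 2"
    by (subst ord_eq_2_iff; simp add: word_simps words_neq_one)+
  then show ?thesis
    using ord_d ord_e d e by (auto simp: dihedral_def m_assoc)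
qed

end

lemma fischer_lines_subset: "l \<in> fischer_lines G D \<Longrightarrow> l \<subseteq> D"
  unfolding fischer_lines_def by blast

lemma collinear_in_D: "collinear G D p q \<Longrightarrow> p \<in> D \<and> q \<in> D"
  unfolding collinear_def using fischer_lines_subset by blast

lemma char_2_add_eq_0_iff:
  fixes a b :: "'r::comm_ring_1"
  assumes "(2::'r) = 0"
  shows "a + b = 0 \<longleftrightarrow> a = b"
proof -
  have "b + b = 0" using assms by (metis mult_2 mult_zero_left)
  then show ?thesis by (metis add_right_cancel)
qed

context
  fixes G :: "'a monoid" (structure)
  assumes group: "group G"
begin

interpretation group G by (fact group)

lemma fischer_line_eq:
  assumes l: "l \<in> fischer_lines G D" and x: "x \<in> l" and y: "y \<in> l" and "x \<noteq> y"
  shows "distinct [x, y, x \<otimes> y \<otimes> x]" "l = {x, y, x \<otimes> y \<otimes> x}"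
proof -
  obtain H where card_l: "card l = 3" and H: "subgroup H G" "G\<lparr>carrier := H\<rparr> \<cong> sym_group 3"
    and l_eq: "l = {h \<in> H. ord h = 2}"
    using l unfolding fischer_lines_def by blast
  have xH: "x \<in> H" "ord x = 2" and yH: "y \<in> H" "ord y = 2" using x y l_eq by auto
  have xc: "x \<in> carrier G" and yc: "y \<in> carrier G" using xH yH subgroup.mem_carrier[OF H(1)] by auto
  have xx: "x \<otimes> x = \<one>" and yy: "y \<otimes> y = \<one>" and y1: "y \<noteq> \<one>"
    using xH yH ord_eq_2_iff xc yc by auto
  define z where "z = x \<otimes> y \<otimes> x"
  have cancel: "x \<otimes> (x \<otimes> w) = w" "y \<otimes> (y \<otimes> w) = w" if "w \<in> carrier G" for w
    using that xc yc xx yy by (simp_all flip: m_assoc)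
  have y_eq: "y = x \<otimes> z \<otimes> x" and zz: "z \<otimes> z = \<one>"
    using xc yc xx yy by (simp_all add: z_def m_assoc cancel)
  have "z \<in> H" using xH yH H(1) by (simp add: z_def subgroup.m_closed)
  moreover have "z \<noteq> \<one>" using y_eq y1 xx xc by auto
  then have "ord z = 2" using zz xc yc by (subst ord_eq_2_iff) (simp_all add: z_def)
  ultimately have "z \<in> l" using l_eq by simp
  have "z \<noteq> x" using y_eq xx xc \<open>x \<noteq> y\<close> by auto
  moreover have "z \<noteq> y"
  proof
    assume "z = y"
    have "x \<otimes> y = x \<otimes> y \<otimes> (x \<otimes> x)" using xc yc xx by simp
    also have "\<dots> = z \<otimes> x" using xc yc by (simp add: z_def m_assoc)
    also have "\<dots> = y \<otimes> x" using \<open>z = y\<close> by simp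
    finally show False using sym_group_3_involutions_not_commute[OF H xH yH \<open>x \<noteq> y\<close>] by contradiction
  qed
  ultimately show "distinct [x, y, x \<otimes> y \<otimes> x]" using \<open>x \<noteq> y\<close> by (auto simp: z_def)
  then have "card {x, y, z} = card l" using card_l by (simp add: z_def)
  moreover have "finite l" using card_l by (simp add: card_ge_0_finite)
  ultimately show "l = {x, y, x \<otimes> y \<otimes> x}"
    using x y \<open>z \<in> l\<close> card_subset_eq[of l "{x, y, z}"] by (simp add: z_def)
qed

lemma fischer_line_unique:
  assumes "l \<in> fischer_lines G D" "l' \<in> fischer_lines G D"
    and "x \<in> l" "y \<in> l" "x \<in> l'" "y \<in> l'" "x \<noteq> y"
  shows "l = l'"
  using fischer_line_eq(2)[of l D x y] fischer_line_eq(2)[of l' D x y] assms by simp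

lemma wedge_eq_third:
  assumes "{p, q, r} \<in> fischer_lines G D" "distinct [p, q, r]"
  shows "wedge G D p q = r"
  unfolding wedge_def
proof (rule the_equality)
  fix r' assume "r' \<noteq> p \<and> r' \<noteq> q \<and> (\<exists>l\<in>fischer_lines G D. l = {p, q, r'})"
  then have "{p, q, r'} = {p, q, r}" and "r' \<notin> {p, q}"
    using fischer_line_unique[OF _ assms(1), of "{p, q, r'}" p q] assms(2) by auto
  then show "r' = r" by blast
qed (use assms in auto)

lemma collinear_wedge:
  assumes "collinear G D p q"
  shows "{p, q, wedge G D p q} \<in> fischer_lines G D" "distinct [p, q, wedge G D p q]"
proof -
  obtain l where l: "l \<in> fischer_lines G D" "p \<in> l" "q \<in> l" "p \<noteq> q"
    using assms unfolding collinear_def by blast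
  then have "{p, q, p \<otimes> q \<otimes> p} \<in> fischer_lines G D" "distinct [p, q, p \<otimes> q \<otimes> p]"
    using fischer_line_eq[OF l] by simp_all
  moreover have "wedge G D p q = p \<otimes> q \<otimes> p" using wedge_eq_third calculation .
  ultimately show "{p, q, wedge G D p q} \<in> fischer_lines G D" "distinct [p, q, wedge G D p q]"
    by simp_all
qed

lemma collinear_wedge_left:
  assumes "collinear G D p q"
  shows "collinear G D (wedge G D p q) q" "wedge G D (wedge G D p q) q = p"
proof -
  let ?r = "wedge G D p q"
  have "{?r, q, p} \<in> fischer_lines G D" "distinct [?r, q, p]"
    using collinear_wedge[OF assms] by (auto simp: insert_commute)
  then show "collinear G D ?r q" "wedge G D ?r q = p"
    using wedge_eq_third unfolding collinear_def by auto
qed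

lemma basis_prod_column_sum:
  assumes "finite D" and "(2::'r::comm_ring_1) = 0"
  shows "(\<Sum>p\<in>D. basis_prod G D p q x :: 'r) = 0"
proof -
  define f :: "'a \<Rightarrow> 'r" where "f p =
    (if x = p then 1 else 0) + (if x = q then 1 else 0) + (if x = wedge G D p q then 1 else 0)" for p
  have "(\<Sum>p\<in>D. basis_prod G D p q x :: 'r) = (\<Sum>p\<in>D. if collinear G D p q then f p else 0)"
    unfolding basis_prod_def f_def by (intro sum.cong) auto
  also have "\<dots> = (\<Sum>p\<in>{p \<in> D. collinear G D p q}. f p)"
    using assms(1) by (simp add: sum.inter_filter)
  also have "\<dots> = 0"
  proof (rule sum_involution_eq_0[where h = "\<lambda>p. wedge G D p q"])
    fix p assume p: "p \<in> {p \<in> D. collinear G D p q}"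
    then have "collinear G D p q" by simp
    note wedge = collinear_wedge[OF this] collinear_wedge_left[OF this]
    then show "wedge G D p q \<in> {p \<in> D. collinear G D p q}" "wedge G D (wedge G D p q) q = p"
      "wedge G D p q \<noteq> p"
      using collinear_in_D[OF wedge(3)] by auto
    have "f (wedge G D p q) = f p" using wedge by (simp add: f_def ac_simps)
    then show "f (wedge G D p q) + f p = 0" using char_2_add_eq_0_iff assms(2) by blast
  qed
  finally show ?thesis .
qed

lemma point_sum_multiple_in_matsuo_ann:
  assumes "finite D" and "(2::'r::comm_ring_1) = 0"
  shows "(\<lambda>x. c * point_sum D x :: 'r) \<in> matsuo_ann G D"
proof -
  have "matsuo_mult G D (\<lambda>x. c * point_sum D x) w x = 0" for w :: "'a \<Rightarrow> 'r" and x
  proof -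
    have "matsuo_mult G D (\<lambda>x. c * point_sum D x) w x
        = (\<Sum>q\<in>D. c * w q * (\<Sum>p\<in>D. basis_prod G D p q x))"
      unfolding matsuo_mult_def point_sum_def
      by (subst sum.swap) (simp add: sum_distrib_left mult.assoc)
    then show ?thesis using basis_prod_column_sum[OF assms] by simp
  qed
  then show ?thesis
    by (auto simp: matsuo_ann_def matsuo_carrier_def point_sum_def)
qed

lemma matsuo_mult_basis:
  fixes v :: "'a \<Rightarrow> 'r::comm_ring_1"
  assumes "finite D" "r \<in> D"
  shows "matsuo_mult G D v (\<lambda>x. if x = r then 1 else 0) y = (\<Sum>a\<in>D. v a * basis_prod G D a r y)"
proof -
  have "v a * (if q = r then 1 else 0) * c = (if q = r then v a * c else 0)" for a q and c :: 'r
    by simp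
  then show ?thesis unfolding matsuo_mult_def using assms by (simp add: sum.delta)
qed

lemma basis_prod_line_point:
  assumes l: "{p, q, r} \<in> fischer_lines G D" "distinct [p, q, r]"
  shows "basis_prod G D a r p = (if a = p \<or> a = q then 1 else 0)"
proof -
  have "wedge G D p r = q" "wedge G D q r = p"
    using l wedge_eq_third[of p r q D] wedge_eq_third[of q r p D] by (auto simp: insert_commute)
  moreover have "collinear G D p r" "collinear G D q r"
    using l unfolding collinear_def by (auto intro!: bexI[OF _ l(1)])
  moreover have "wedge G D a r \<noteq> p" if a: "collinear G D a r" "a \<notin> {p, q}"
  proof
    assume "wedge G D a r = p"
    then have "{a, r, p} \<in> fischer_lines G D" "a \<noteq> r"
      using collinear_wedge[OF a(1)] by simp_all
    then have "{a, r, p} = {p, q, r}" using fischer_line_unique[OF _ l(1), of _ p r] l(2) by simp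
    then show False using a \<open>a \<noteq> r\<close> by auto
  qed
  ultimately show ?thesis
    using l(2) by (cases "a \<in> {p, q}") (auto simp: basis_prod_def)
qed

lemma matsuo_ann_collinear_eq:
  assumes "finite D" and two: "(2::'r::comm_ring_1) = 0"
    and v: "(v :: 'a \<Rightarrow> 'r) \<in> matsuo_ann G D" and pq: "collinear G D p q"
  shows "v p = v q"
proof -
  let ?r = "wedge G D p q"
  have line: "{p, q, ?r} \<in> fischer_lines G D" "distinct [p, q, ?r]" using collinear_wedge[OF pq] .
  have D: "p \<in> D" "q \<in> D" "?r \<in> D" using fischer_lines_subset[OF line(1)] by auto
  let ?e = "\<lambda>x. if x = ?r then 1 else 0"
  have "?e \<in> matsuo_carrier D" using D by (simp add: matsuo_carrier_def)
  with v have "matsuo_mult G D v ?e = (\<lambda>_. 0)" unfolding matsuo_ann_def by blast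
  then have "0 = matsuo_mult G D v ?e p" by simp
  also have "\<dots> = (\<Sum>a\<in>D. if a = p \<or> a = q then v a else 0)"
    using assms(1) D by (simp add: matsuo_mult_basis basis_prod_line_point[OF line] if_distrib cong: if_cong)
  also have "\<dots> = sum v {a \<in> D. a = p \<or> a = q}"
    using assms(1) by (simp add: sum.inter_filter)
  also have "{a \<in> D. a = p \<or> a = q} = {p, q}" using D by auto
  also have "sum v {p, q} = v p + v q" using line(2) by simp
  finally have "v p + v q = 0" ..
  then show ?thesis using char_2_add_eq_0_iff[OF two] by blast
qed

end

lemma (in group) generate_conj_closed:
  assumes C: "C \<subseteq> carrier G" and S: "S \<subseteq> carrier G"
    and conj: "\<And>h c. h \<in> S \<Longrightarrow> c \<in> C \<Longrightarrow> h \<otimes> c \<otimes> inv h \<in> C \<and> inv h \<otimes> c \<otimes> h \<in> C"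
    and g: "g \<in> generate G S"
  shows "\<forall>c\<in>C. g \<otimes> c \<otimes> inv g \<in> C"
  using g
proof (induction rule: generate.induct)
  case one
  show ?case using C by auto
next
  case (incl h)
  then show ?case using conj by blast
next
  case (inv h)
  then show ?case using conj S by auto
next
  case (eng g1 g2)
  have g1: "g1 \<in> carrier G" and g2: "g2 \<in> carrier G"
    using eng.hyps generate_in_carrier[OF S] by auto
  show ?case
  proof
    fix c assume "c \<in> C"
    with C eng.IH have "g1 \<otimes> (g2 \<otimes> c \<otimes> inv g2) \<otimes> inv g1 \<in> C" "c \<in> carrier G" by auto
    then show "g1 \<otimes> g2 \<otimes> c \<otimes> inv (g1 \<otimes> g2) \<in> C"
      using g1 g2 by (simp add: m_assoc inv_mult_group)
  qed
qed

context
  fixes G :: "'a monoid" (structure) and D :: "'a set"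
  assumes T: "three_transposition_group G D"
begin

lemma group_G: "group G"
  using T unfolding three_transposition_group_def by blast

interpretation group G by (fact group_G)

lemma D_subset_carrier: "D \<subseteq> carrier G"
  using T unfolding three_transposition_group_def by blast

lemma involution_D:
  assumes "x \<in> D"
  shows "ord x = 2" "x \<otimes> x = \<one>" "inv x = x"
proof -
  show "ord x = 2" using T assms unfolding three_transposition_group_def by blast
  moreover have "x \<in> carrier G" using D_subset_carrier assms by blast
  ultimately show "x \<otimes> x = \<one>" "inv x = x" using ord_eq_2_iff involution_inv by auto
qed

lemma conj_mem_D:
  assumes g: "g \<in> carrier G" and c: "c \<in> D"
  shows "g \<otimes> c \<otimes> inv g \<in> D"
proof -
  obtain d where d: "d \<in> D" and D_eq: "D = {h \<otimes> d \<otimes> inv h | h. h \<in> carrier G}"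
    using T unfolding three_transposition_group_def by blast
  then obtain h where h: "h \<in> carrier G" and "c = h \<otimes> d \<otimes> inv h" using c by blast
  then have "g \<otimes> c \<otimes> inv g = (g \<otimes> h) \<otimes> d \<otimes> inv (g \<otimes> h)"
    using g d D_subset_carrier by (auto simp: m_assoc inv_mult_group)
  then show ?thesis using g h by (subst D_eq) auto
qed

lemma D_conjugate:
  assumes x: "x \<in> D" and y: "y \<in> D"
  obtains g where "g \<in> carrier G" "y = g \<otimes> x \<otimes> inv g"
proof -
  obtain d where d: "d \<in> D" and D_eq: "D = {h \<otimes> d \<otimes> inv h | h. h \<in> carrier G}"
    using T unfolding three_transposition_group_def by blast
  obtain a b where a: "a \<in> carrier G" "x = a \<otimes> d \<otimes> inv a"
    and b: "b \<in> carrier G" "y = b \<otimes> d \<otimes> inv b"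
    using x y by (subst (asm) (1 2) D_eq) blast
  have dc: "d \<in> carrier G" using d D_subset_carrier by blast
  have "(b \<otimes> inv a) \<otimes> x \<otimes> inv (b \<otimes> inv a) = b \<otimes> (inv a \<otimes> a) \<otimes> d \<otimes> (inv a \<otimes> a) \<otimes> inv b"
    by (simp only: a b m_assoc inv_mult_group inv_inv dc inv_closed m_closed)
  also have "\<dots> = y" using a b dc by simp
  finally have "y = (b \<otimes> inv a) \<otimes> x \<otimes> inv (b \<otimes> inv a)" ..
  with a b show thesis by (intro that[of "b \<otimes> inv a"]) simp_all
qed

lemma reflection_fixes_or_collinear:
  assumes x: "x \<in> D" and c: "c \<in> D"
  shows "x \<otimes> c \<otimes> x = c \<or> collinear G D c (x \<otimes> c \<otimes> x)"
proof -
  have xc: "x \<in> carrier G" and cc: "c \<in> carrier G" using x c D_subset_carrier by auto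
  note inv_x = involution_D[OF x] and inv_c = involution_D[OF c]
  have "ord (x \<otimes> c) \<in> {1, 2, 3}" using T x c unfolding three_transposition_group_def by blast
  then consider "ord (x \<otimes> c) = 1" | "ord (x \<otimes> c) = 2" | "ord (x \<otimes> c) = 3" by blast
  then show ?thesis
  proof cases
    case 1
    then have "x \<otimes> c = \<one>" using ord_eq_1 xc cc by simp
    then have "c = x" using inv_equality[of x c] inv_c xc cc by simp
    then show ?thesis using inv_x xc by simp
  next
    case 2
    then have "x \<otimes> c \<otimes> x \<otimes> c = \<one>" using ord_eq_2_iff xc cc by (simp add: m_assoc)
    then have "inv c = x \<otimes> c \<otimes> x" using inv_equality xc cc by simp
    then show ?thesis using inv_c by simp
  next
    case 3
    interpret involution_pair_order_3 G x c
      using xc cc inv_x inv_c 3 by unfold_locales auto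
    have "x \<otimes> c \<otimes> x \<in> D" using conj_mem_D[OF xc c] inv_x by simp
    then have "{x, c, x \<otimes> c \<otimes> x} \<in> fischer_lines G D"
      using x c involutions_distinct dihedral_subgroup dihedral_iso_sym_group_3 dihedral_involutions
      unfolding fischer_lines_def by (auto simp: distinct_card)
    then show ?thesis using involutions_distinct unfolding collinear_def by auto
  qed
qed

lemma collinearity_connected:
  assumes x: "x \<in> D" and y: "y \<in> D"
  shows "(x, y) \<in> {(a, b). collinear G D a b}\<^sup>*"
proof -
  define C where "C = {z. (x, z) \<in> {(a, b). collinear G D a b}\<^sup>*}"
  have C_D: "C \<subseteq> D"
  proof
    fix z assume "z \<in> C"
    then have "(x, z) \<in> {(a, b). collinear G D a b}\<^sup>*" unfolding C_def by simp
    then show "z \<in> D" using x by (cases rule: rtranclE) (auto dest: collinear_in_D)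
  qed
  have reflect: "h \<otimes> c \<otimes> inv h \<in> C \<and> inv h \<otimes> c \<otimes> h \<in> C" if h: "h \<in> D" and c: "c \<in> C" for h c
  proof -
    have "h \<otimes> c \<otimes> h = c \<or> collinear G D c (h \<otimes> c \<otimes> h)"
      using reflection_fixes_or_collinear[OF h] C_D c by blast
    then have "h \<otimes> c \<otimes> h \<in> C" using c unfolding C_def by (auto intro: rtrancl_into_rtrancl)
    then show ?thesis using involution_D(3)[OF h] by simp
  qed
  have gen: "generate G D = carrier G" using T unfolding three_transposition_group_def by blast
  obtain g where g: "g \<in> carrier G" and y_eq: "y = g \<otimes> x \<otimes> inv g" using D_conjugate[OF x y] .
  have "\<forall>c\<in>C. g \<otimes> c \<otimes> inv g \<in> C"
    using generate_conj_closed[OF _ D_subset_carrier reflect] C_D D_subset_carrier g gen by blast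
  moreover have "x \<in> C" unfolding C_def by simp
  ultimately have "y \<in> C" using y_eq by simp
  then show ?thesis unfolding C_def by simp
qed

lemma matsuo_ann_eq_point_sum_multiple:
  assumes "finite D" and "(2::'r::comm_ring_1) = 0" and v: "(v :: 'a \<Rightarrow> 'r) \<in> matsuo_ann G D"
    and d: "d \<in> D"
  shows "v = (\<lambda>x. v d * point_sum D x)"
proof
  fix x
  show "v x = v d * point_sum D x"
  proof (cases "x \<in> D")
    case True
    from collinearity_connected[OF d True] have "v d = v x"
    proof (induction rule: rtrancl_induct)
      case (step y z)
      then show ?case using matsuo_ann_collinear_eq[OF group_G assms(1,2) v] by simp
    qed simp
    then show ?thesis using True by (simp add: point_sum_def)
  next
    case False
    then show ?thesis using v by (simp add: matsuo_ann_def matsuo_carrier_def point_sum_def)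
  qed
qed

end

theorem lemma5p8:
  fixes G :: "'a monoid" and D :: "'a set"
  assumes "three_transposition_group G D"
    and "finite D"
    and "(2::'r::comm_ring_1) = 0"
  shows "(matsuo_ann G D :: ('a \<Rightarrow> 'r) set) = {(\<lambda>x. c * point_sum D x) | c. True}"
proof
  obtain d where d: "d \<in> D" using assms(1) unfolding three_transposition_group_def by blast
  show "(matsuo_ann G D :: ('a \<Rightarrow> 'r) set) \<subseteq> {(\<lambda>x. c * point_sum D x) | c. True}"
    using matsuo_ann_eq_point_sum_multiple[OF assms _ d] by blast
  show "{(\<lambda>x. c * point_sum D x) | c. True} \<subseteq> (matsuo_ann G D :: ('a \<Rightarrow> 'r) set)"
    using point_sum_multiple_in_matsuo_ann[OF group_G[OF assms(1)] assms(2,3)] by blast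
qed

end
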